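(* Consider the semi-distributed gossip network described in the context, with $n$ nodes, source self-update rate $\lambda_e>0$, source-to-network update rate $\lambda>0$, and total gossip capacity $B=n\lambda$. Then, with $\lambda_e$ and $\lambda$ fixed, the steady-state mean version age $a_i=\lim_{t\to\infty}\mathbb{E}[\Delta_i(t)]$ of any node $i$ scales as $O(1)$ as $n\to\infty$.
   Context: A source (node $0$) and nodes $\mathcal{N}=\{1,\dots,n\}$ form a fully connected network. The source generates new versions of its information according to a Poisson process of rate $\lambda_e$; $N_s(t)$ denotes the source's version at time $t$ and $N_i(t)$ the version held by node $i$. The source sends its current version to each node $i$ according to an independent Poisson process of rate $\lambda/n$ (total rate $\lambda$). The version age of node $i$ is $\Delta_i(t)=N_s(t)-N_i(t)$: a source self-update increases every $\Delta_i$ by $1$; a source-to-node-$i$ update sets $\Delta_i$ to $0$; when node $j$ gossips to node $i$, node $i$'s age becomes $\min\{\Delta_j(t),\Delta_i(t)\}$. A node gossiping at total rate $B$ sends gossip updates to each of its $n-1$ neighbors according to a Poisson process of rate $B/(n-1)$. Semi-distributed scheme: whenever a node receives an update from the source, it sends a pilot signal to all other nodes and starts gossiping with total rate $B$; a gossiping node stops gossiping as soon as it receives a pilot signal from another node. Thus at any time (at most) one node gossips, namely the one most recently updated by the source. The steady-state mean age is $a_i=\lim_{t\to\infty}\mathbb{E}[\Delta_i(t)]$. *)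

theory Defs
  imports "HOL-Probability.Probability"
begin

text \<open>
  State of the semi-distributed gossip network: the currently gossiping node
  (None before any source update has happened) and the version ages
  Delta_i for nodes i in {1..n}.
\<close>
type_synonym gstate = "nat option \<times> (nat \<Rightarrow> nat)"

definition self_upd :: "gstate \<Rightarrow> gstate" where
  "self_upd s = (fst s, (\<lambda>i. snd s i + 1))"

definition src_upd :: "gstate \<Rightarrow> nat \<Rightarrow> gstate" where
  "src_upd s i = (Some i, (snd s)(i := 0))"

definition gossip_upd :: "nat \<Rightarrow> gstate \<Rightarrow> nat \<Rightarrow> gstate" where
  "gossip_upd j s i = (fst s, (snd s)(i := min (snd s j) (snd s i)))"

text \<open>
  Uniformised jump kernel of the continuous-time Markov chain, with
  uniformisation rate R = lambda_e + lambda + B.  Given a jump,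
  with probability lambda_e/R it is a source self-update; otherwise with
  probability lambda/(lambda+B) it is a source update of a uniformly chosen
  node (rate lambda/n each); otherwise it is a gossip update from the current
  gossiping node j to a uniformly chosen other node (rate B/(n-1) each), or
  a fictitious self-loop if no node gossips.
\<close>
definition gossip_kernel :: "nat \<Rightarrow> real \<Rightarrow> real \<Rightarrow> real \<Rightarrow> gstate \<Rightarrow> gstate pmf" where
  "gossip_kernel n lam_e lam B s =
     do { b1 \<leftarrow> bernoulli_pmf (lam_e / (lam_e + lam + B));
          if b1 then return_pmf (self_upd s)
          else do { b2 \<leftarrow> bernoulli_pmf (lam / (lam + B));
                    if b2 then map_pmf (src_upd s) (pmf_of_set {1..n})
                    else (case fst s of
                            None \<Rightarrow> return_pmf s
                          | Some j \<Rightarrow> map_pmf (gossip_upd j s) (pmf_of_set ({1..n} - {j}))) } }"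

definition gossip_init :: gstate where
  "gossip_init = (None, (\<lambda>_. 0))"

definition gossip_jumps :: "nat \<Rightarrow> real \<Rightarrow> real \<Rightarrow> real \<Rightarrow> nat \<Rightarrow> gstate pmf" where
  "gossip_jumps n lam_e lam B k =
     ((\<lambda>p. bind_pmf p (gossip_kernel n lam_e lam B)) ^^ k) (return_pmf gossip_init)"

text \<open>
  Expected version age E[Delta_i(t)] of node i at time t, via uniformisation:
  the number of jumps in [0,t] is Poisson with mean R t.
\<close>
definition mean_age_at :: "nat \<Rightarrow> real \<Rightarrow> real \<Rightarrow> real \<Rightarrow> nat \<Rightarrow> real \<Rightarrow> real" where
  "mean_age_at n lam_e lam B i t =
     (let R = lam_e + lam + B in
      \<Sum>k. exp (- (R * t)) * (R * t) ^ k / fact k *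
           measure_pmf.expectation (gossip_jumps n lam_e lam B k) (\<lambda>s. real (snd s i)))"

end

(*
  Follow a node i through the jumps of the chain uniformised at rate R = lam_e + lam + B. The
  gossiping node j is the one most recently updated by the source, so its age is minimal (an
  invariant of the chain); hence gossip from j to i replaces Delta_i by Delta_j, and the expected
  age of i and the expected gap Delta_i - Delta_j after k jumps satisfy an affine recurrence whose
  linear part contracts at rate 1 - lam / (n R). The mean age after k jumps therefore converges
  geometrically to lam_e / lam + (1 - 1/n) lam_e / (lam / n + B / (n - 1)), Poisson mixing carries
  this limit over to continuous time, and for B = n lam the limit is at most 2 lam_e / lam.
*)
theory Submission
  imports Defs
begin

lemma sum_if_eq_const:
  fixes a b :: "'b::comm_ring_1"
  assumes "finite A"
  shows "(\<Sum>m\<in>A. if m = i then a else b) = of_nat (card A) * b + (if i \<in> A then a - b else 0)"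
proof -
  have "(\<Sum>m\<in>A. if m = i then a else b) = (\<Sum>m\<in>A. b + (if m = i then a - b else 0))"
    by (rule sum.cong) auto
  then show ?thesis using assms by (simp add: sum.distrib)
qed

lemma expectation_bind_pmf_finite:
  fixes h :: "'b \<Rightarrow> real"
  assumes "finite (set_pmf p)" "\<And>x. x \<in> set_pmf p \<Longrightarrow> finite (set_pmf (f x))"
  shows "measure_pmf.expectation (p \<bind> f) h =
         measure_pmf.expectation p (\<lambda>x. measure_pmf.expectation (f x) h)"
proof -
  have "measure_pmf.expectation (p \<bind> f) h =
        (\<Sum>a\<in>set_pmf p. pmf p a *\<^sub>R measure_pmf.expectation (f a) h)"
    by (rule pmf_expectation_bind) (use assms in auto)
  also have "\<dots> = measure_pmf.expectation p (\<lambda>x. measure_pmf.expectation (f x) h)"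
    by (rule integral_measure_pmf[symmetric]) (use assms in auto)
  finally show ?thesis .
qed

lemma expectation_bernoulli_bind:
  fixes f :: "'a \<Rightarrow> real"
  assumes "0 \<le> p" "p \<le> 1" "finite (set_pmf P)" "finite (set_pmf Q)"
  shows "measure_pmf.expectation (bernoulli_pmf p \<bind> (\<lambda>b. if b then P else Q)) f =
         p * measure_pmf.expectation P f + (1 - p) * measure_pmf.expectation Q f"
  using assms by (subst expectation_bind_pmf_finite) (auto simp: mult.commute)

lemma expectation_affine_finite:
  fixes g u v :: "'a \<Rightarrow> real"
  assumes "finite (set_pmf p)" "\<And>x. x \<in> set_pmf p \<Longrightarrow> g x = a * u x + b * v x + c"
  shows "measure_pmf.expectation p g =
         a * measure_pmf.expectation p u + b * measure_pmf.expectation p v + c"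
proof -
  have "measure_pmf.expectation p g = measure_pmf.expectation p (\<lambda>x. a * u x + b * v x + c)"
    by (rule integral_cong_AE) (auto intro: AE_pmfI simp: assms(2))
  also have "\<dots> = a * measure_pmf.expectation p u + b * measure_pmf.expectation p v + c"
    by (simp add: integrable_measure_pmf_finite[OF assms(1)])
  finally show ?thesis .
qed

lemma linear_recurrence_geometric:
  fixes E H :: "nat \<Rightarrow> real"
  assumes recE: "\<And>k. E (Suc k) = (1 - s * \<alpha>) * E k - c * H k + a"
    and recH: "\<And>k. H (Suc k) = s * (1 - \<alpha>) * E k + (1 - s - c) * H k"
    and s: "0 < s" "s \<le> 1" and \<alpha>: "0 < \<alpha>" "\<alpha> \<le> 1" and c: "0 \<le> c" "s * \<alpha> + c \<le> 1"
  shows "\<exists>d. \<forall>k. \<bar>E k - (a / s + (1 - \<alpha>) * a / (s * \<alpha> + c))\<bar> \<le> d * (1 - s * \<alpha>) ^ k"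
proof -
  define H_fix where "H_fix = (1 - \<alpha>) * a / (s * \<alpha> + c)"
  define u where "u k = E k - H k - a / s" for k
  define v where "v k = H k - H_fix" for k
  have "s * \<alpha> + c > 0" using s \<alpha> c by (simp add: add_pos_nonneg)
  then have H_fix: "(s * \<alpha> + c) * H_fix = (1 - \<alpha>) * a" unfolding H_fix_def by simp
  have u_Suc: "u (Suc k) = (1 - s) * u k" for k
    unfolding u_def recE recH using s by (simp add: field_simps)
  have v_Suc: "v (Suc k) = s * (1 - \<alpha>) * u k + (1 - s * \<alpha> - c) * v k" for k
  proof -
    have "v (Suc k) = s * (1 - \<alpha>) * u k + (1 - s * \<alpha> - c) * v k
        + ((1 - \<alpha>) * a - (s * \<alpha> + c) * H_fix)"
      unfolding u_def v_def recH using s by (simp add: field_simps)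
    then show ?thesis using H_fix by simp
  qed
  have coeffs: "0 \<le> 1 - s" "0 \<le> s * (1 - \<alpha>)" "0 \<le> 1 - s * \<alpha> - c" "0 \<le> 1 - s * \<alpha>"
    using s \<alpha> c by auto
  \<comment> \<open>\<open>u\<close> decays by the factor \<open>1 - s\<close> and feeds \<open>v\<close> with weight \<open>s (1 - \<alpha>)\<close>,
    so \<open>\<bar>u\<bar> + \<bar>v\<bar>\<close> contracts by \<open>1 - s \<alpha>\<close>.\<close>
  have contract: "\<bar>u (Suc k)\<bar> + \<bar>v (Suc k)\<bar> \<le> (1 - s * \<alpha>) * (\<bar>u k\<bar> + \<bar>v k\<bar>)" for k
  proof -
    have "\<bar>v (Suc k)\<bar> \<le> \<bar>s * (1 - \<alpha>) * u k\<bar> + \<bar>(1 - s * \<alpha> - c) * v k\<bar>"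
      unfolding v_Suc by (rule abs_triangle_ineq)
    also have "\<dots> = s * (1 - \<alpha>) * \<bar>u k\<bar> + (1 - s * \<alpha> - c) * \<bar>v k\<bar>"
      using coeffs
      by (simp only: abs_mult[of "s * (1 - \<alpha>)"] abs_mult[of "1 - s * \<alpha> - c"] abs_of_nonneg)
    finally have "\<bar>v (Suc k)\<bar> \<le> s * (1 - \<alpha>) * \<bar>u k\<bar> + (1 - s * \<alpha> - c) * \<bar>v k\<bar>" .
    moreover have "\<bar>u (Suc k)\<bar> = (1 - s) * \<bar>u k\<bar>"
      unfolding u_Suc using coeffs(1) by (simp add: abs_mult)
    moreover have "(1 - s) * \<bar>u k\<bar> + s * (1 - \<alpha>) * \<bar>u k\<bar> = (1 - s * \<alpha>) * \<bar>u k\<bar>"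
      by (simp add: algebra_simps)
    moreover have "0 \<le> c * \<bar>v k\<bar>" using c by simp
    ultimately show ?thesis by (simp add: algebra_simps)
  qed
  have bound: "\<bar>u k\<bar> + \<bar>v k\<bar> \<le> (\<bar>u 0\<bar> + \<bar>v 0\<bar>) * (1 - s * \<alpha>) ^ k" for k
  proof (induction k)
    case (Suc k)
    have "(1 - s * \<alpha>) * (\<bar>u k\<bar> + \<bar>v k\<bar>) \<le> (1 - s * \<alpha>) * ((\<bar>u 0\<bar> + \<bar>v 0\<bar>) * (1 - s * \<alpha>) ^ k)"
      using Suc coeffs(4) by (rule mult_left_mono)
    then show ?case using contract[of k] by (simp add: mult.left_commute)
  qed simp
  have "\<bar>E k - (a / s + H_fix)\<bar> \<le> (\<bar>u 0\<bar> + \<bar>v 0\<bar>) * (1 - s * \<alpha>) ^ k" for k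
    using bound[of k] unfolding u_def v_def by linarith
  then show ?thesis unfolding H_fix_def by blast
qed

lemma poisson_mixture_dist_le:
  fixes E :: "nat \<Rightarrow> real"
  assumes x: "0 \<le> x" and bound: "\<And>k. \<bar>E k - L\<bar> \<le> d * \<rho> ^ k"
  shows "\<bar>(\<Sum>k. exp (- x) * x ^ k / fact k * E k) - L\<bar> \<le> d * exp (- ((1 - \<rho>) * x))"
proof -
  define P where "P k = exp (- x) * x ^ k / fact k" for k
  have exp_sums: "(\<lambda>k. exp (- x) * (y ^ k / fact k)) sums (exp (- x) * exp y)" for y :: real
    using sums_mult[OF exp_converges[of y]] by (simp add: divide_inverse_commute)
  have "P sums 1"
    using exp_sums[of x] unfolding P_def by (simp add: exp_minus)
  then have L_sums: "(\<lambda>k. P k * L) sums L" using sums_mult2 by fastforce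
  have "(\<lambda>k. d * (P k * \<rho> ^ k)) sums (d * exp (- ((1 - \<rho>) * x)))"
    using sums_mult[OF exp_sums[of "x * \<rho>"], of d]
    by (simp add: P_def power_mult_distrib exp_add[symmetric] algebra_simps)
  then have dom: "summable (\<lambda>k. d * (P k * \<rho> ^ k))"
      "(\<Sum>k. d * (P k * \<rho> ^ k)) = d * exp (- ((1 - \<rho>) * x))"
    by (simp_all add: sums_iff)
  have P_nonneg: "0 \<le> P k" for k unfolding P_def using x by simp
  have le: "norm (P k * (E k - L)) \<le> d * (P k * \<rho> ^ k)" for k
    using mult_left_mono[OF bound P_nonneg] by (simp add: abs_mult P_nonneg mult_ac)
  have summ: "summable (\<lambda>k. P k * (E k - L))"
    by (rule summable_comparison_test[OF _ dom(1)]) (use le in auto)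
  have "(\<lambda>k. P k * E k) sums (L + (\<Sum>k. P k * (E k - L)))"
    using sums_add[OF L_sums summable_sums[OF summ]] by (simp add: algebra_simps)
  then have "(\<Sum>k. exp (- x) * x ^ k / fact k * E k) - L = (\<Sum>k. P k * (E k - L))"
    by (simp add: sums_iff P_def)
  also have "\<bar>\<dots>\<bar> \<le> d * exp (- ((1 - \<rho>) * x))"
    using norm_suminf_le[OF le dom(1)] dom(2) by simp
  finally show ?thesis .
qed

lemma poisson_mixture_tendsto:
  fixes E :: "nat \<Rightarrow> real"
  assumes R: "0 < R" and \<rho>: "\<rho> < 1" and bound: "\<And>k. \<bar>E k - L\<bar> \<le> d * \<rho> ^ k"
  shows "((\<lambda>t. \<Sum>k. exp (- (R * t)) * (R * t) ^ k / fact k * E k) \<longlongrightarrow> L) at_top"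
proof -
  have "\<forall>\<^sub>F t in at_top.
      norm ((\<Sum>k. exp (- (R * t)) * (R * t) ^ k / fact k * E k) - L)
        \<le> d * exp (- ((1 - \<rho>) * (R * t)))"
  proof (rule eventually_at_top_linorderI[of 0])
    fix t :: real
    assume "0 \<le> t"
    then show "norm ((\<Sum>k. exp (- (R * t)) * (R * t) ^ k / fact k * E k) - L)
        \<le> d * exp (- ((1 - \<rho>) * (R * t)))"
      using R poisson_mixture_dist_le[of "R * t", OF _ bound] by simp
  qed
  moreover have "filterlim (\<lambda>t. (1 - \<rho>) * R * t) at_top at_top"
    using R \<rho> by (intro filterlim_tendsto_pos_mult_at_top[OF tendsto_const _ filterlim_ident]) simp
  then have "((\<lambda>t. exp (- ((1 - \<rho>) * (R * t)))) \<longlongrightarrow> 0) at_top"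
    by (simp add: filterlim_compose[OF exp_at_bot] filterlim_uminus_at_top mult.assoc)
  then have "((\<lambda>t. d * exp (- ((1 - \<rho>) * (R * t)))) \<longlongrightarrow> 0) at_top"
    by (rule tendsto_mult_right_zero)
  ultimately have "((\<lambda>t. (\<Sum>k. exp (- (R * t)) * (R * t) ^ k / fact k * E k) - L) \<longlongrightarrow> 0) at_top"
    by (rule Lim_null_comparison)
  then show ?thesis by (rule LIM_zero_cancel)
qed

definition gossip_step :: "nat \<Rightarrow> gstate \<Rightarrow> gstate pmf" where
  "gossip_step n s = (case fst s of
                        None \<Rightarrow> return_pmf s
                      | Some j \<Rightarrow> map_pmf (gossip_upd j s) (pmf_of_set ({1..n} - {j})))"

lemma gossip_kernel_eq:
  "gossip_kernel n lam_e lam B s =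
     bernoulli_pmf (lam_e / (lam_e + lam + B)) \<bind>
       (\<lambda>b. if b then return_pmf (self_upd s)
            else bernoulli_pmf (lam / (lam + B)) \<bind>
                   (\<lambda>b. if b then map_pmf (src_upd s) (pmf_of_set {1..n}) else gossip_step n s))"
  unfolding gossip_kernel_def gossip_step_def by (rule refl)

lemma atLeastAtMost_minus_singleton_nonempty: "2 \<le> n \<Longrightarrow> {1..n} - {j} \<noteq> {}" for n j :: nat
proof -
  assume "2 \<le> n"
  then have "1 \<in> {1..n} - {j} \<or> 2 \<in> {1..n} - {j}" by auto
  then show ?thesis by blast
qed

lemma finite_set_gossip_step: "2 \<le> n \<Longrightarrow> finite (set_pmf (gossip_step n s))"
  unfolding gossip_step_def
  by (cases "fst s")
     (simp_all add: set_pmf_of_set[OF atLeastAtMost_minus_singleton_nonempty] del: One_nat_def)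

lemma finite_set_gossip_kernel: "2 \<le> n \<Longrightarrow> finite (set_pmf (gossip_kernel n lam_e lam B s))"
  unfolding gossip_kernel_eq set_bind_pmf by (auto simp: finite_set_gossip_step)

lemma expectation_gossip_step:
  fixes f :: "gstate \<Rightarrow> real"
  assumes "2 \<le> n"
  shows "measure_pmf.expectation (gossip_step n s) f =
     (case fst s of
        None \<Rightarrow> f s
      | Some j \<Rightarrow> (\<Sum>m\<in>{1..n}-{j}. f (gossip_upd j s m)) / card ({1..n}-{j}))"
  unfolding gossip_step_def using assms
  by (cases "fst s")
     (simp_all add: integral_pmf_of_set[OF atLeastAtMost_minus_singleton_nonempty] del: One_nat_def)

lemma expectation_gossip_kernel:
  fixes f :: "gstate \<Rightarrow> real"
  assumes n: "2 \<le> n" and rates: "0 \<le> lam_e" "0 \<le> lam" "0 \<le> B" "0 < lam_e + lam + B"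
  shows "measure_pmf.expectation (gossip_kernel n lam_e lam B s) f =
    (lam_e * f (self_upd s) + lam / n * (\<Sum>m\<in>{1..n}. f (src_upd s m))
       + B * measure_pmf.expectation (gossip_step n s) f) / (lam_e + lam + B)"
proof -
  define R where "R = lam_e + lam + B"
  define src where "src = (\<Sum>m\<in>{1..n}. f (src_upd s m)) / n"
  define gos where "gos = measure_pmf.expectation (gossip_step n s) f"
  have src: "measure_pmf.expectation (pmf_of_set {1..n}) (\<lambda>m. f (src_upd s m)) = src"
    using n by (simp add: src_def integral_pmf_of_set del: One_nat_def)
  have p1: "0 \<le> lam_e / R" "lam_e / R \<le> 1" and p2: "0 \<le> lam / (lam + B)" "lam / (lam + B) \<le> 1"
    using rates by (auto simp: R_def divide_le_eq_1)
  have inner: "measure_pmf.expectation (bernoulli_pmf (lam / (lam + B)) \<bind>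
      (\<lambda>b. if b then map_pmf (src_upd s) (pmf_of_set {1..n}) else gossip_step n s)) f =
      lam / (lam + B) * src + (1 - lam / (lam + B)) * gos"
    using n by (subst expectation_bernoulli_bind[OF p2])
      (simp_all add: finite_set_gossip_step src gos_def del: One_nat_def)
  have "measure_pmf.expectation (gossip_kernel n lam_e lam B s) f =
        lam_e / R * f (self_upd s)
        + (1 - lam_e / R) * (lam / (lam + B) * src + (1 - lam / (lam + B)) * gos)"
    unfolding gossip_kernel_eq R_def[symmetric] using n
    by (subst expectation_bernoulli_bind[OF p1])
       (simp_all add: inner set_bind_pmf finite_set_gossip_step)
  also have "\<dots> = (lam_e * f (self_upd s) + lam * src + B * gos) / R"
  proof (cases "lam + B = 0")
    case True
    then have "lam = 0" "B = 0" using rates by auto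
    then show ?thesis using rates by (simp add: R_def)
  next
    case False
    have R: "0 < R" using rates by (simp add: R_def)
    have p: "1 - lam_e / R = (lam + B) / R" using R by (simp add: R_def field_simps)
    have q: "1 - lam / (lam + B) = B / (lam + B)" using False by (simp add: field_simps)
    have "(lam + B) / R * (lam / (lam + B) * src + B / (lam + B) * gos) =
          (lam + B) / R * ((lam * src + B * gos) / (lam + B))"
      by (simp add: add_divide_distrib)
    also have "\<dots> = (lam * src + B * gos) / R" using False by simp
    finally show ?thesis unfolding p q by (simp add: add_divide_distrib)
  qed
  finally show ?thesis by (simp add: R_def src_def gos_def)
qed

definition age :: "nat \<Rightarrow> gstate \<Rightarrow> real" where
  "age i s = real (snd s i)"

definition age_gap :: "nat \<Rightarrow> gstate \<Rightarrow> real" where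
  "age_gap i s = (case fst s of None \<Rightarrow> 0 | Some j \<Rightarrow> age i s - age j s)"

definition min_age_gossiper :: "nat \<Rightarrow> gstate \<Rightarrow> bool" where
  "min_age_gossiper n s =
     (case fst s of None \<Rightarrow> True | Some j \<Rightarrow> j \<in> {1..n} \<and> (\<forall>m. snd s j \<le> snd s m))"

lemma min_age_gossiper_gossip_kernel:
  assumes "2 \<le> n" "min_age_gossiper n s" "x \<in> set_pmf (gossip_kernel n lam_e lam B s)"
  shows "min_age_gossiper n x"
  using assms unfolding gossip_kernel_eq set_bind_pmf gossip_step_def
  by (cases "fst s")
     (auto simp: min_age_gossiper_def self_upd_def src_upd_def gossip_upd_def
        set_pmf_of_set[OF atLeastAtMost_minus_singleton_nonempty] split: if_splits)

lemma gossip_jumps_Suc: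
  "gossip_jumps n lam_e lam B (Suc k) = gossip_jumps n lam_e lam B k \<bind> gossip_kernel n lam_e lam B"
  by (simp add: gossip_jumps_def)

lemma finite_set_gossip_jumps: "2 \<le> n \<Longrightarrow> finite (set_pmf (gossip_jumps n lam_e lam B k))"
  by (induction k)
     (simp_all add: gossip_jumps_def[of _ _ _ _ 0] gossip_jumps_Suc finite_set_gossip_kernel)

lemma min_age_gossiper_gossip_jumps:
  "2 \<le> n \<Longrightarrow> x \<in> set_pmf (gossip_jumps n lam_e lam B k) \<Longrightarrow> min_age_gossiper n x"
proof (induction k arbitrary: x)
  case 0
  then show ?case by (simp add: gossip_jumps_def gossip_init_def min_age_gossiper_def)
next
  case (Suc k)
  then show ?case by (auto simp: gossip_jumps_Suc intro: min_age_gossiper_gossip_kernel)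
qed

lemma expectation_gossip_jumps_Suc:
  fixes f :: "gstate \<Rightarrow> real"
  assumes "2 \<le> n"
  shows "measure_pmf.expectation (gossip_jumps n lam_e lam B (Suc k)) f =
         measure_pmf.expectation (gossip_jumps n lam_e lam B k)
           (\<lambda>x. measure_pmf.expectation (gossip_kernel n lam_e lam B x) f)"
  unfolding gossip_jumps_Suc using assms
  by (intro expectation_bind_pmf_finite finite_set_gossip_jumps finite_set_gossip_kernel)

lemma age_src_upd: "age i (src_upd s m) = (if m = i then 0 else age i s)"
  by (simp add: age_def src_upd_def)

lemma age_gap_src_upd: "age_gap i (src_upd s m) = (if m = i then 0 else age i s)"
  by (simp add: age_gap_def age_def src_upd_def)

lemma age_gossip_upd:
  assumes "min_age_gossiper n s" "fst s = Some j"
  shows "age i (gossip_upd j s m) = (if m = i then age j s else age i s)"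
  using assms by (auto simp: age_def gossip_upd_def min_age_gossiper_def min_def)

lemma age_gap_gossip_upd:
  assumes "min_age_gossiper n s" "fst s = Some j" "m \<noteq> j"
  shows "age_gap i (gossip_upd j s m) = (if m = i then 0 else age_gap i s)"
  using assms by (auto simp: age_gap_def age_def gossip_upd_def min_age_gossiper_def min_def)

lemma sum_src_upd:
  fixes f :: "gstate \<Rightarrow> real"
  assumes "i \<in> {1..n}" "\<And>m. f (src_upd s m) = (if m = i then 0 else age i s)"
  shows "(\<Sum>m\<in>{1..n}. f (src_upd s m)) = (real n - 1) * age i s"
  using assms by (simp add: sum_if_eq_const algebra_simps)

lemma expectation_gossip_step_age:
  assumes "2 \<le> n" "i \<in> {1..n}" "min_age_gossiper n s"
  shows "measure_pmf.expectation (gossip_step n s) (age i) = age i s - age_gap i s / (real n - 1)"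
proof (cases "fst s")
  case None
  then show ?thesis using assms by (simp add: expectation_gossip_step age_gap_def)
next
  case (Some j)
  have j: "j \<in> {1..n}" using assms(3) Some by (simp add: min_age_gossiper_def)
  have "(\<Sum>m\<in>{1..n}-{j}. age i (gossip_upd j s m)) = (real n - 1) * age i s - age_gap i s"
    using assms j Some
    by (auto simp: age_gossip_upd sum_if_eq_const card_Diff_singleton age_gap_def of_nat_diff)
  then show ?thesis using assms j Some
    by (simp add: expectation_gossip_step card_Diff_singleton of_nat_diff field_simps)
qed

lemma expectation_gossip_step_age_gap:
  assumes "2 \<le> n" "i \<in> {1..n}" "min_age_gossiper n s"
  shows "measure_pmf.expectation (gossip_step n s) (age_gap i) =
         age_gap i s - age_gap i s / (real n - 1)"
proof (cases "fst s")
  case None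
  then show ?thesis using assms by (simp add: expectation_gossip_step age_gap_def)
next
  case (Some j)
  have j: "j \<in> {1..n}" using assms(3) Some by (simp add: min_age_gossiper_def)
  have "(\<Sum>m\<in>{1..n}-{j}. age_gap i (gossip_upd j s m)) =
        (\<Sum>m\<in>{1..n}-{j}. if m = i then 0 else age_gap i s)"
    using assms Some by (intro sum.cong) (auto simp: age_gap_gossip_upd)
  also have "\<dots> = (real n - 1) * age_gap i s - age_gap i s"
    using assms j Some
    by (auto simp: sum_if_eq_const card_Diff_singleton age_gap_def of_nat_diff algebra_simps)
  finally show ?thesis using assms j Some
    by (simp add: expectation_gossip_step card_Diff_singleton of_nat_diff field_simps)
qed

lemma expectation_gossip_kernel_age:
  assumes "2 \<le> n" "i \<in> {1..n}" "min_age_gossiper n s"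
    and rates: "0 \<le> lam_e" "0 \<le> lam" "0 \<le> B" "0 < lam_e + lam + B"
  shows "measure_pmf.expectation (gossip_kernel n lam_e lam B s) (age i) =
    age i s + (lam_e - lam / n * age i s - B / (real n - 1) * age_gap i s) / (lam_e + lam + B)"
proof -
  have self: "age i (self_upd s) = age i s + 1" by (simp add: age_def self_upd_def)
  have src: "(\<Sum>m\<in>{1..n}. age i (src_upd s m)) = (real n - 1) * age i s"
    using assms(2) by (rule sum_src_upd) (rule age_src_upd)
  have "real n - 1 > 0" using assms(1) by simp
  then have num: "lam_e * (age i s + 1) + lam / n * ((real n - 1) * age i s)
        + B * (age i s - age_gap i s / (real n - 1))
      = (lam_e + lam + B) * age i s + (lam_e - lam / n * age i s - B / (real n - 1) * age_gap i s)"
    by (simp add: field_simps)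
  show ?thesis using rates(4)
    by (simp only: expectation_gossip_kernel[OF assms(1) rates] self src
          expectation_gossip_step_age[OF assms(1-3)] num) (simp add: add_divide_distrib)
qed

lemma expectation_gossip_kernel_age_gap:
  assumes "2 \<le> n" "i \<in> {1..n}" "min_age_gossiper n s"
    and rates: "0 \<le> lam_e" "0 \<le> lam" "0 \<le> B" "0 < lam_e + lam + B"
  shows "measure_pmf.expectation (gossip_kernel n lam_e lam B s) (age_gap i) =
    age_gap i s + (lam * (1 - 1 / n) * age i s - (lam + B / (real n - 1)) * age_gap i s)
      / (lam_e + lam + B)"
proof -
  have self: "age_gap i (self_upd s) = age_gap i s"
    by (cases "fst s") (simp_all add: age_gap_def age_def self_upd_def)
  have src: "(\<Sum>m\<in>{1..n}. age_gap i (src_upd s m)) = (real n - 1) * age i s"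
    using assms(2) by (rule sum_src_upd) (rule age_gap_src_upd)
  have "real n - 1 > 0" using assms(1) by simp
  then have num: "lam_e * age_gap i s + lam / n * ((real n - 1) * age i s)
        + B * (age_gap i s - age_gap i s / (real n - 1))
      = (lam_e + lam + B) * age_gap i s
        + (lam * (1 - 1 / n) * age i s - (lam + B / (real n - 1)) * age_gap i s)"
    by (simp add: field_simps)
  show ?thesis using rates(4)
    by (simp only: expectation_gossip_kernel[OF assms(1) rates] self src
          expectation_gossip_step_age_gap[OF assms(1-3)] num) (simp add: add_divide_distrib)
qed

lemma expectation_gossip_jumps_age_Suc:
  assumes n: "2 \<le> n" and i: "i \<in> {1..n}"
    and rates: "0 \<le> lam_e" "0 \<le> lam" "0 \<le> B" "0 < lam_e + lam + B"
  shows "measure_pmf.expectation (gossip_jumps n lam_e lam B (Suc k)) (age i) =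
    measure_pmf.expectation (gossip_jumps n lam_e lam B k) (age i)
      + (lam_e - lam / n * measure_pmf.expectation (gossip_jumps n lam_e lam B k) (age i)
         - B / (real n - 1) * measure_pmf.expectation (gossip_jumps n lam_e lam B k) (age_gap i))
        / (lam_e + lam + B)"
proof -
  define R where "R = lam_e + lam + B"
  have R: "0 < R" using rates by (simp add: R_def)
  have n1: "0 < real n - 1" using n by simp
  have "measure_pmf.expectation (gossip_kernel n lam_e lam B x) (age i) =
      (1 - lam / n / R) * age i x + (- (B / (real n - 1) / R)) * age_gap i x + lam_e / R"
    if "x \<in> set_pmf (gossip_jumps n lam_e lam B k)" for x
    unfolding expectation_gossip_kernel_age[OF n i min_age_gossiper_gossip_jumps[OF n that] rates, folded R_def]
    using R n1 by (simp add: field_simps)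
  then have step: "measure_pmf.expectation (gossip_jumps n lam_e lam B k)
      (\<lambda>x. measure_pmf.expectation (gossip_kernel n lam_e lam B x) (age i)) =
      (1 - lam / n / R) * measure_pmf.expectation (gossip_jumps n lam_e lam B k) (age i)
      + (- (B / (real n - 1) / R)) * measure_pmf.expectation (gossip_jumps n lam_e lam B k) (age_gap i)
      + lam_e / R"
    by (rule expectation_affine_finite[OF finite_set_gossip_jumps[OF n]])
  show ?thesis unfolding expectation_gossip_jumps_Suc[OF n] R_def[symmetric] step
    using R n1 by (simp add: field_simps)
qed

lemma expectation_gossip_jumps_age_gap_Suc:
  assumes n: "2 \<le> n" and i: "i \<in> {1..n}"
    and rates: "0 \<le> lam_e" "0 \<le> lam" "0 \<le> B" "0 < lam_e + lam + B"
  shows "measure_pmf.expectation (gossip_jumps n lam_e lam B (Suc k)) (age_gap i) =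
    measure_pmf.expectation (gossip_jumps n lam_e lam B k) (age_gap i)
      + (lam * (1 - 1 / n) * measure_pmf.expectation (gossip_jumps n lam_e lam B k) (age i)
         - (lam + B / (real n - 1)) * measure_pmf.expectation (gossip_jumps n lam_e lam B k) (age_gap i))
        / (lam_e + lam + B)"
proof -
  define R where "R = lam_e + lam + B"
  have R: "0 < R" using rates by (simp add: R_def)
  have n1: "0 < real n - 1" using n by simp
  have "measure_pmf.expectation (gossip_kernel n lam_e lam B x) (age_gap i) =
      (lam * (1 - 1 / n) / R) * age i x + (1 - (lam + B / (real n - 1)) / R) * age_gap i x + 0"
    if "x \<in> set_pmf (gossip_jumps n lam_e lam B k)" for x
    unfolding expectation_gossip_kernel_age_gap[OF n i min_age_gossiper_gossip_jumps[OF n that] rates, folded R_def]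
    using R n1 by (simp add: field_simps)
  then have step: "measure_pmf.expectation (gossip_jumps n lam_e lam B k)
      (\<lambda>x. measure_pmf.expectation (gossip_kernel n lam_e lam B x) (age_gap i)) =
      (lam * (1 - 1 / n) / R) * measure_pmf.expectation (gossip_jumps n lam_e lam B k) (age i)
      + (1 - (lam + B / (real n - 1)) / R) * measure_pmf.expectation (gossip_jumps n lam_e lam B k) (age_gap i)
      + 0"
    by (rule expectation_affine_finite[OF finite_set_gossip_jumps[OF n]])
  show ?thesis unfolding expectation_gossip_jumps_Suc[OF n] R_def[symmetric] step
    using R n1 by (simp add: field_simps)
qed

lemma mean_age_at_tendsto:
  assumes n: "2 \<le> n" and i: "i \<in> {1..n}" and rates: "0 \<le> lam_e" "0 < lam" "0 \<le> B"
  shows "((\<lambda>t. mean_age_at n lam_e lam B i t) \<longlongrightarrow>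
           lam_e / lam + (1 - 1 / n) * lam_e / (lam / n + B / (real n - 1))) at_top"
proof -
  define R where "R = lam_e + lam + B"
  define E where "E k = measure_pmf.expectation (gossip_jumps n lam_e lam B k) (age i)" for k
  define H where "H k = measure_pmf.expectation (gossip_jumps n lam_e lam B k) (age_gap i)" for k
  define s where "s = lam / R"
  define \<alpha> where "\<alpha> = 1 / real n"
  define c where "c = B / (R * (real n - 1))"
  have R: "0 < R" using rates by (simp add: R_def)
  have n1: "0 < real n - 1" using n by simp
  have rates': "0 \<le> lam_e" "0 \<le> lam" "0 \<le> B" "0 < lam_e + lam + B" using rates by simp_all
  have recE: "E (Suc k) = (1 - s * \<alpha>) * E k - c * H k + lam_e / R" for k
    unfolding expectation_gossip_jumps_age_Suc[OF n i rates', of k, folded R_def E_def H_def]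
    using R n1 by (simp add: s_def \<alpha>_def c_def field_simps)
  have recH: "H (Suc k) = s * (1 - \<alpha>) * E k + (1 - s - c) * H k" for k
    unfolding expectation_gossip_jumps_age_gap_Suc[OF n i rates', of k, folded R_def E_def H_def]
    using R n1 by (simp add: s_def \<alpha>_def c_def field_simps)
  have s\<alpha>c: "s * \<alpha> + c = (lam / n + B / (real n - 1)) / R"
    using R n1 by (simp add: s_def \<alpha>_def c_def field_simps)
  have "lam / n \<le> lam / 1" "B / (real n - 1) \<le> B / 1"
    using rates n by (intro divide_left_mono; simp)+
  then have "s * \<alpha> + c \<le> 1" unfolding s\<alpha>c using R rates by (simp add: R_def)
  moreover have "0 < s" "s \<le> 1" "0 < \<alpha>" "\<alpha> \<le> 1" "0 \<le> c"
    using R n n1 rates by (simp_all add: s_def \<alpha>_def c_def R_def)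
  ultimately obtain d where d: "\<And>k. \<bar>E k - (lam_e / R / s + (1 - \<alpha>) * (lam_e / R) / (s * \<alpha> + c))\<bar>
      \<le> d * (1 - s * \<alpha>) ^ k"
    using linear_recurrence_geometric[where E = E and H = H and a = "lam_e / R", OF recE recH]
    by blast
  have "lam_e / R / s + (1 - \<alpha>) * (lam_e / R) / (s * \<alpha> + c) =
        lam_e / lam + (1 - 1 / n) * lam_e / (lam / n + B / (real n - 1))"
    unfolding s\<alpha>c using R rates by (simp add: s_def \<alpha>_def)
  moreover have "mean_age_at n lam_e lam B i =
      (\<lambda>t. \<Sum>k. exp (- (R * t)) * (R * t) ^ k / fact k * E k)"
    by (simp add: fun_eq_iff mean_age_at_def Let_def R_def E_def age_def[abs_def])
  moreover have "1 - s * \<alpha> < 1" using rates R n by (simp add: s_def \<alpha>_def)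
  ultimately show ?thesis using poisson_mixture_tendsto[OF R _ d] by simp
qed

theorem theorem1:
  fixes lam_e lam :: real
  assumes "lam_e > 0" and "lam > 0"
  shows "\<exists>C N. \<forall>n\<ge>N. \<forall>i\<in>{1..n}. \<exists>a.
           ((\<lambda>t. mean_age_at n lam_e lam (real n * lam) i t) \<longlongrightarrow> a) at_top \<and> a \<le> C"
proof (rule exI[of _ "2 * lam_e / lam"], rule exI[of _ 2], intro allI impI ballI)
  fix n i :: nat
  assume n: "2 \<le> n" and i: "i \<in> {1..n}"
  let ?D = "lam / n + real n * lam / (real n - 1)"
  have "lam \<le> real n * lam / (real n - 1)" using n assms by (simp add: field_simps)
  then have "lam \<le> ?D" using assms by (simp add: add_increasing)
  then have "(1 - 1 / n) * lam_e / ?D \<le> lam_e / lam"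
    using assms by (intro frac_le) (simp_all add: mult_left_le_one_le)
  then show "\<exists>a. ((\<lambda>t. mean_age_at n lam_e lam (real n * lam) i t) \<longlongrightarrow> a) at_top
                 \<and> a \<le> 2 * lam_e / lam"
    using mean_age_at_tendsto[OF n i, of lam_e lam "real n * lam"] assms by auto
qed

end
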